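(* EpochPOP, as described in the context, is free from use-after-free errors: no node freed by a reclaiming thread is subsequently accessed by any thread.
   Context: Setting: an asynchronous shared-memory system with a fixed set of threads operating on a linked concurrent data structure; each unlinked node is retired by exactly one thread. EpochPOP: there is a shared monotonically increasing global epoch (incremented periodically at operation starts) and a shared array reservedEpoch with one slot per thread. At the start of each operation a thread writes the current global epoch into its reservedEpoch slot; at the end it writes a maximal value MAX and clears its local reservations. During an operation, nodes are accessed only through a read(ptrAddr, slot) call that repeatedly loads the pointer at ptrAddr, stores it in a private local reservation slot (no fence, not published), and re-loads until the loads agree (hazard-pointer style usage, so that a returned node was not retired at the time of validation). Each thread also has a row of a shared reservation array and a shared counter publishCounter. On retire, a thread records the current global epoch as the node's retire epoch and appends it to its retire list; periodically it frees every node in its retire list whose retire epoch is smaller than the minimum value in reservedEpoch; if afterwards the retire list is still at least a fixed multiple of the threshold, it records all publishCounters, sends a POSIX signal to every other thread (whose handler copies its local reservations into its shared slots and increments its publishCounter), waits until all other publishCounters have increased, and frees every node of its retire list not among the published reservations. Assumption: after being signalled, a thread publishes its reservations within bounded time. *)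

theory Defs
  imports Main "HOL-Library.Extended_Nat"
begin

text \<open>An interleaving (sequentially consistent) model of EpochPOP.  The reserved-epoch value MAX is represented
  by infinity in enat.\<close>

datatype nstatus = Unalloc | Live | Retired | Freed

datatype pcv =
    Idle
  | Starting nat      (* operation started, global epoch e has been read *)
  | InOp
  | CheckPop          (* after the epoch-based freeing pass *)
  | Waiting           (* POP: signals sent, waiting for publishCounters *)

record ('t, 'n) st =
  gEpoch  :: nat
  resv    :: "'t \<Rightarrow> enat"
  status  :: "'n \<Rightarrow> nstatus"
  pc      :: "'t \<Rightarrow> pcv"
  lres    :: "'t \<Rightarrow> nat \<Rightarrow> 'n option"      (* private local reservation slots *)
  valid   :: "'t \<Rightarrow> nat \<Rightarrow> bool"          (* slot holds a node returned by read *)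
  rlist   :: "'t \<Rightarrow> ('n \<times> nat) list"     (* retire list with retire epochs *)
  pubRes  :: "'t \<Rightarrow> nat \<Rightarrow> 'n option"      (* shared reservation rows *)
  pubCnt  :: "'t \<Rightarrow> nat"
  pending :: "'t \<Rightarrow> bool"
  snap    :: "'t \<Rightarrow> 't \<Rightarrow> nat"           (* recorded publishCounters of a reclaimer *)

definition epop_init :: "('t, 'n) st" where
  "epop_init = \<lparr> gEpoch = 0, resv = (\<lambda>_. \<infinity>), status = (\<lambda>_. Unalloc),
     pc = (\<lambda>_. Idle), lres = (\<lambda>_ _. None), valid = (\<lambda>_ _. False),
     rlist = (\<lambda>_. []), pubRes = (\<lambda>_ _. None), pubCnt = (\<lambda>_. 0),
     pending = (\<lambda>_. False), snap = (\<lambda>_ _. 0) \<rparr>"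

text \<open>One atomic step of some thread.  B is the POP trigger bound
  (the fixed multiple of the threshold).\<close>

inductive epop_step :: "nat \<Rightarrow> ('t, 'n) st \<Rightarrow> ('t, 'n) st \<Rightarrow> bool" for B :: nat where
  begin_op:
    "\<lbrakk> pc s t = Idle; g' = (if inc then Suc (gEpoch s) else gEpoch s) \<rbrakk> \<Longrightarrow>
     epop_step B s (s\<lparr> gEpoch := g', pc := (pc s)(t := Starting g') \<rparr>)"
| reserve:
    "pc s t = Starting e \<Longrightarrow>
     epop_step B s (s\<lparr> resv := (resv s)(t := enat e), pc := (pc s)(t := InOp) \<rparr>)"
| read_store:   (* a load of the pointer may yield anything; it is stored, unvalidated *)
    "pc s t = InOp \<Longrightarrow>
     epop_step B s (s\<lparr> lres := (lres s)(t := (lres s t)(k := v)),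
                        valid := (valid s)(t := (valid s t)(k := False)) \<rparr>)"
| read_validate: (* the re-load agrees: by HP-style usage the node is not retired *)
    "\<lbrakk> pc s t = InOp; lres s t k = Some n; status s n = Live \<rbrakk> \<Longrightarrow>
     epop_step B s (s\<lparr> valid := (valid s)(t := (valid s t)(k := True)) \<rparr>)"
| alloc:
    "\<lbrakk> pc s t = InOp; status s n = Unalloc \<rbrakk> \<Longrightarrow>
     epop_step B s (s\<lparr> status := (status s)(n := Live) \<rparr>)"
| retire:
    "\<lbrakk> pc s t = InOp; status s n = Live \<rbrakk> \<Longrightarrow>
     epop_step B s (s\<lparr> status := (status s)(n := Retired),
                        rlist := (rlist s)(t := rlist s t @ [(n, gEpoch s)]) \<rparr>)"
| epoch_free:
    "\<lbrakk> pc s t = InOp; m = (INF u. resv s u) \<rbrakk> \<Longrightarrow>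
     epop_step B s (s\<lparr> status := (\<lambda>x. if \<exists>e. (x, e) \<in> set (rlist s t) \<and> enat e < m
                                        then Freed else status s x),
                        rlist := (rlist s)(t := filter (\<lambda>(x, e). \<not> enat e < m) (rlist s t)),
                        pc := (pc s)(t := CheckPop) \<rparr>)"
| pop_skip:
    "\<lbrakk> pc s t = CheckPop; length (rlist s t) < B \<rbrakk> \<Longrightarrow>
     epop_step B s (s\<lparr> pc := (pc s)(t := InOp) \<rparr>)"
| pop_start:
    "\<lbrakk> pc s t = CheckPop; B \<le> length (rlist s t) \<rbrakk> \<Longrightarrow>
     epop_step B s (s\<lparr> snap := (snap s)(t := pubCnt s),
                        pubRes := (pubRes s)(t := lres s t),
                        pending := (\<lambda>u. if u = t then pending s u else True),
                        pc := (pc s)(t := Waiting) \<rparr>)"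
| handle:      (* signal handler of thread u *)
    "pending s u \<Longrightarrow>
     epop_step B s (s\<lparr> pubRes := (pubRes s)(u := lres s u),
                        pubCnt := (pubCnt s)(u := Suc (pubCnt s u)),
                        pending := (pending s)(u := False) \<rparr>)"
| pop_free:
    "\<lbrakk> pc s t = Waiting; \<forall>u. u \<noteq> t \<longrightarrow> snap s t u < pubCnt s u;
       P = {x. \<exists>u k. pubRes s u k = Some x} \<rbrakk> \<Longrightarrow>
     epop_step B s (s\<lparr> status := (\<lambda>x. if x \<in> fst ` set (rlist s t) \<and> x \<notin> P
                                        then Freed else status s x),
                        rlist := (rlist s)(t := filter (\<lambda>(x, e). x \<in> P) (rlist s t)),
                        pc := (pc s)(t := InOp) \<rparr>)"
| end_op:
    "pc s t = InOp \<Longrightarrow>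
     epop_step B s (s\<lparr> resv := (resv s)(t := \<infinity>),
                        lres := (lres s)(t := (\<lambda>_. None)),
                        valid := (valid s)(t := (\<lambda>_. False)),
                        pc := (pc s)(t := Idle) \<rparr>)"

inductive epop_reach :: "nat \<Rightarrow> ('t, 'n) st \<Rightarrow> bool" for B :: nat where
  init: "epop_reach B epop_init"
| step: "\<lbrakk> epop_reach B s; epop_step B s s' \<rbrakk> \<Longrightarrow> epop_reach B s'"

definition accesses :: "('t, 'n) st \<Rightarrow> 't \<Rightarrow> 'n \<Rightarrow> bool" where
  "accesses s t n \<longleftrightarrow> pc s t = InOp \<and> (\<exists>k. lres s t k = Some n \<and> valid s t k)"

end

theory Submission
  imports Defs
begin

(* A node held in a validated slot was Live when it was validated, and the holder's reserved
   epoch had been published before; hence any retire-list entry for it carries a retire epoch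
   at least that reservation, so the epoch-based pass, which frees only epochs below the
   minimum reservation, spares it.  While its reclaimer waits in POP, the node also sits in the
   shared row of every thread that has published since the reclaimer's snapshot (the
   reclaimer's own row was filled when it sent the signals), so the POP pass spares it too. *)

definition active :: "pcv \<Rightarrow> bool" where
  "active p \<longleftrightarrow> p = InOp \<or> p = CheckPop \<or> p = Waiting"

definition epoch_inv :: "('t, 'n) st \<Rightarrow> bool" where
  "epoch_inv s \<longleftrightarrow>
     (\<forall>u k. valid s u k \<longrightarrow> active (pc s u)) \<and>
     (\<forall>u. active (pc s u) \<longrightarrow> (\<exists>e. resv s u = enat e \<and> e \<le> gEpoch s)) \<and>
     (\<forall>u e. pc s u = Starting e \<longrightarrow> e \<le> gEpoch s)"

(* The uniqueness conjunct ensures that freeing a node from one retire list never leaves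
   a Freed node in another. *)
definition retire_list_inv :: "('t, 'n) st \<Rightarrow> bool" where
  "retire_list_inv s \<longleftrightarrow>
     (\<forall>t n e. (n, e) \<in> set (rlist s t) \<longrightarrow> status s n = Retired) \<and>
     (\<forall>t t' n e e'. (n, e) \<in> set (rlist s t) \<longrightarrow> (n, e') \<in> set (rlist s t') \<longrightarrow> t = t' \<and> e = e')"

definition protected :: "('t, 'n) st \<Rightarrow> 't \<Rightarrow> nat \<Rightarrow> 'n \<Rightarrow> bool" where
  "protected s u k n \<longleftrightarrow> (status s n = Live \<or> status s n = Retired) \<and>
     (\<forall>t e. (n, e) \<in> set (rlist s t) \<longrightarrow> resv s u \<le> enat e \<and>
        (pc s t = Waiting \<longrightarrow> (u = t \<or> snap s t u < pubCnt s u) \<longrightarrow> pubRes s u k = Some n))"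

definition protection_inv :: "('t, 'n) st \<Rightarrow> bool" where
  "protection_inv s \<longleftrightarrow> (\<forall>u k n. valid s u k \<longrightarrow> lres s u k = Some n \<longrightarrow> protected s u k n)"

lemma epoch_inv_step: "epop_step B s s' \<Longrightarrow> epoch_inv s \<Longrightarrow> epoch_inv s'"
  by (induction rule: epop_step.induct)
    (auto simp: epoch_inv_def active_def split: if_splits intro: le_SucI)

lemma retire_list_inv_step: "epop_step B s s' \<Longrightarrow> retire_list_inv s \<Longrightarrow> retire_list_inv s'"
proof (induction rule: epop_step.induct)
  case (alloc s t n)
  then have "(n, e) \<notin> set (rlist s u)" for u e
    unfolding retire_list_inv_def by force
  with alloc show ?case unfolding retire_list_inv_def by auto
next
  case (retire s t n)
  then have "(n, e) \<notin> set (rlist s u)" for u e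
    unfolding retire_list_inv_def by force
  with retire show ?case unfolding retire_list_inv_def by auto
next
  case (epoch_free s t m)
  then show ?case unfolding retire_list_inv_def by (auto split: if_splits; blast)
next
  case (pop_free s t P)
  then show ?case unfolding retire_list_inv_def by (auto split: if_splits; force)
qed (auto simp: retire_list_inv_def split: if_splits)

lemma protection_inv_by_slots:
  assumes "protection_inv s" and "valid s' = valid s" and "lres s' = lres s"
    and "\<And>u k n. valid s u k \<Longrightarrow> protected s u k n \<Longrightarrow> protected s' u k n"
  shows "protection_inv s'"
  using assms unfolding protection_inv_def by metis

lemma protection_inv_step:
  assumes "epop_step B s s'" and "epoch_inv s" and "retire_list_inv s" and "protection_inv s"
  shows "protection_inv s'"
  using assms
proof (induction rule: epop_step.induct)
  case (read_validate s t k n)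
  then have "(n, e) \<notin> set (rlist s u)" for u e
    unfolding retire_list_inv_def by fastforce
  with read_validate show ?case unfolding protection_inv_def protected_def by auto
next
  case (retire s t n)
  have reserved_before: "resv s u \<le> enat (gEpoch s)" if "valid s u k" for u k
    using retire.prems(1) that unfolding epoch_inv_def by fastforce
  show ?case
    by (rule protection_inv_by_slots[OF retire.prems(3)])
      (use retire.hyps reserved_before in \<open>auto simp: protected_def\<close>)
next
  case (epoch_free s t m)
  have not_epoch_freed: "\<not> enat e < m" if "protected s u k n" and "(n, e) \<in> set (rlist s t)" for u k n e
  proof -
    have "m \<le> resv s u" using epoch_free.hyps(2) by (simp add: INF_lower)
    also have "\<dots> \<le> enat e" using that unfolding protected_def by blast
    finally show ?thesis by simp
  qed
  show ?case
    by (rule protection_inv_by_slots[OF epoch_free.prems(3)])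
      (use epoch_free.hyps not_epoch_freed in \<open>auto simp: protected_def\<close>)
next
  case (pop_free s t P)
  have published: "n \<in> P" if "protected s u k n" and "(n, e) \<in> set (rlist s t)" for u k n e
    using that pop_free.hyps unfolding protected_def by blast
  show ?case
    by (rule protection_inv_by_slots[OF pop_free.prems(3)])
      (use pop_free.hyps published in \<open>auto simp: protected_def\<close>)
qed (auto simp: epoch_inv_def retire_list_inv_def protection_inv_def protected_def active_def
  split: if_splits)

lemma epop_reach_invariants:
  "epop_reach B s \<Longrightarrow> epoch_inv s \<and> retire_list_inv s \<and> protection_inv s"
proof (induction rule: epop_reach.induct)
  case init
  show ?case
    by (simp add: epop_init_def epoch_inv_def retire_list_inv_def protection_inv_def active_def)
next
  case (step s s')
  then show ?case using epoch_inv_step retire_list_inv_step protection_inv_step by blast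
qed

theorem mainTheorem10:
  fixes B :: nat and s :: "('t::finite, 'n) st" and t :: 't and n :: 'n
  assumes "epop_reach B s"
      and "accesses s t n"
  shows "status s n \<noteq> Freed"
proof -
  from assms(2) obtain k where "valid s t k" and "lres s t k = Some n"
    unfolding accesses_def by blast
  moreover have "protection_inv s" using epop_reach_invariants[OF assms(1)] by blast
  ultimately have "protected s t k n" unfolding protection_inv_def by blast
  then show ?thesis unfolding protected_def by auto
qed

end
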